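(* Let $t\in(0,\infty)\cap\mathbb Q$ be a reduced fraction. (1) If $0<t<1$, then each subword of $\omega_t$ lying between two consecutive occurrences of $z^{\pm1}$ is either of the form $y^{\pm1}$ or of the form $y^{\pm1}x^{\pm1}y^{\pm1}$. (2) If $1<t<\infty$, then each subword of $\omega_t$ lying between two consecutive occurrences of $x^{\pm1}$ is either of the form $y^{\pm1}$ or of the form $y^{\pm1}z^{\pm1}y^{\pm1}$.
   Context: Modified lattice: the planar graph with vertex set $\mathbb Z^2$ whose edges are the horizontal unit segments, the vertical unit segments, and the diagonal segments of slope $-1$ joining $(i,j+1)$ and $(i+1,j)$. Words $\omega_t$: for reduced $t=p/q\in(0,\infty)$, let $L_t$ be the segment from $(0,0)$ to $(q,p)$, oriented from $(0,0)$ to $(q,p)$. List the edges whose relative interior meets $L_t$, in the order of the intersection points along $L_t$. A horizontal (resp. diagonal, vertical) edge contributes $x$ (resp. $y$, $z$) if its midpoint is not on the right-hand side of $L_t$ (including lying on $L_t$), and $x^{-1}$ (resp. $y^{-1}$, $z^{-1}$) if its midpoint is on the right-hand side. $\omega_t$ is the concatenation of these letters. The notation $y^{\pm1}x^{\pm1}y^{\pm1}$ means a word of three letters with these generators and arbitrary exponents $\pm1$. *)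

theory Defs
  imports Complex_Main
begin

text \<open>Edges of the modified lattice on Z^2:
  H i j : horizontal edge from (i,j) to (i+1,j)
  V i j : vertical edge from (i,j) to (i,j+1)
  D i j : diagonal edge (slope -1) from (i,j+1) to (i+1,j).\<close>
datatype edge = H int int | V int int | D int int

text \<open>Generators: X (horizontal), Y (diagonal), Z (vertical).
  A letter is a generator with a sign; True means exponent +1, False exponent -1.\<close>
datatype gen = X | Y | Z

type_synonym letter = "gen \<times> bool"

text \<open>Points of L_t (t = p/q) are s * (q,p) for s in [0,1].  For an edge not
  parallel to L_t, the (unique) parameter s at which the line of L_t meets
  the line of the edge.\<close>
fun edge_param :: "nat \<Rightarrow> nat \<Rightarrow> edge \<Rightarrow> real" where
  "edge_param p q (H i j) = real_of_int j / real p"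
| "edge_param p q (V i j) = real_of_int i / real q"
| "edge_param p q (D i j) = real_of_int (i + j + 1) / real (p + q)"

fun edge_meets :: "nat \<Rightarrow> nat \<Rightarrow> edge \<Rightarrow> bool" where
  "edge_meets p q (H i j) = (let s = real_of_int j / real p in
       0 \<le> s \<and> s \<le> 1 \<and> real_of_int i < s * real q \<and> s * real q < real_of_int i + 1)"
| "edge_meets p q (V i j) = (let s = real_of_int i / real q in
       0 \<le> s \<and> s \<le> 1 \<and> real_of_int j < s * real p \<and> s * real p < real_of_int j + 1)"
| "edge_meets p q (D i j) = (let s = real_of_int (i + j + 1) / real (p + q) in
       0 \<le> s \<and> s \<le> 1 \<and> real_of_int i < s * real q \<and> s * real q < real_of_int i + 1)"

fun midpoint_e :: "edge \<Rightarrow> real \<times> real" where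
  "midpoint_e (H i j) = (real_of_int i + 1/2, real_of_int j)"
| "midpoint_e (V i j) = (real_of_int i, real_of_int j + 1/2)"
| "midpoint_e (D i j) = (real_of_int i + 1/2, real_of_int j + 1/2)"

definition right_side :: "nat \<Rightarrow> nat \<Rightarrow> real \<times> real \<Rightarrow> bool" where
  "right_side p q m = (real q * snd m - real p * fst m < 0)"

fun edge_gen :: "edge \<Rightarrow> gen" where
  "edge_gen (H i j) = X"
| "edge_gen (D i j) = Y"
| "edge_gen (V i j) = Z"

definition edge_letter :: "nat \<Rightarrow> nat \<Rightarrow> edge \<Rightarrow> letter" where
  "edge_letter p q e = (edge_gen e, \<not> right_side p q (midpoint_e e))"

definition crossing_edges :: "nat \<Rightarrow> nat \<Rightarrow> edge list" where
  "crossing_edges p q = (THE es. distinct es \<and> set es = {e. edge_meets p q e}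
                                \<and> sorted (map (edge_param p q) es))"

definition omega :: "nat \<Rightarrow> nat \<Rightarrow> letter list" where
  "omega p q = map (edge_letter p q) (crossing_edges p q)"

definition between :: "'a list \<Rightarrow> nat \<Rightarrow> nat \<Rightarrow> 'a list" where
  "between w a b = take (b - a - 1) (drop (a + 1) w)"

end

theory Submission
  imports Defs
begin

(* Parametrise L_t by s in [0,1]. It crosses the vertical lines x = i at s = i/q, the horizontal
   lines y = j at s = j/p and the anti-diagonals x + y = n at s = n/(p+q); by coprimality these
   parameters are pairwise distinct, so the crossed edges are ordered by the integer key
   s p q (p+q). A crossed horizontal or vertical edge joins two consecutive anti-diagonals, and
   after crossing the diagonal of a unit square L_t leaves the square through its top or its right
   side. Hence the letters of omega_t alternate between y and letters x, z. If p < q, then between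
   two crossed horizontal lines L_t crosses a vertical line, so two consecutive z's enclose y or
   y x y; the case q < p is symmetric. *)

lemma not_dvd_between_multiples:
  fixes k d x :: int
  assumes "k * d < x" and "x < (k + 1) * d"
  shows "\<not> d dvd x"
proof
  assume "d dvd x"
  then obtain m where x: "x = m * d" by (metis dvd_def mult.commute)
  have "0 < d" using assms by (simp add: algebra_simps)
  then have "k < m" "m < k + 1" using assms unfolding x by simp_all
  then show False by simp
qed

lemma div_eq_between_multiples:
  fixes k d x :: int
  assumes "k * d < x" and "x < (k + 1) * d"
  shows "x div d = k"
  by (rule int_div_pos_eq[where r = "x - d * k"]) (use assms in \<open>auto simp: algebra_simps\<close>)

lemma between_multiples_div:
  fixes d x :: int
  assumes "0 < d" and "\<not> d dvd x"
  shows "x div d * d < x \<and> x < (x div d + 1) * d"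
proof -
  have "x mod d \<noteq> 0" "0 \<le> x mod d" "x mod d < d"
    using assms by (simp_all add: dvd_eq_mod_eq_0)
  then show ?thesis
    unfolding distrib_right using div_mult_mod_eq[of x d] by linarith
qed

lemma coprime_not_dvd_mult:
  fixes d m x :: int
  assumes "coprime d m" and "0 < x" and "x < d"
  shows "\<not> d dvd x * m"
  using assms zdvd_imp_le[of d x] by (auto simp: coprime_dvd_mult_left_iff)

lemma between_map: "between (map f w) a b = map f (between w a b)"
  by (simp add: between_def take_map drop_map)

lemma map_fst_omega: "map fst (omega p q) = map edge_gen (crossing_edges p q)"
  by (simp add: omega_def edge_letter_def)

lemma sorted_wrt_nth_between:
  fixes f :: "'a \<Rightarrow> 'b::linorder"
  assumes sorted: "sorted_wrt (\<lambda>x y. f x < f y) w"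
    and "k < length w" and "l < length w" and "z \<in> set w"
    and "f (w ! k) < f z" and "f z < f (w ! l)"
  shows "\<exists>m. k < m \<and> m < l \<and> w ! m = z"
proof -
  obtain m where m: "m < length w" "w ! m = z"
    using \<open>z \<in> set w\<close> by (auto simp: in_set_conv_nth)
  have mono: "f (w ! i) < f (w ! j)" if "i < j" "j < length w" for i j
    using sorted that by (simp add: sorted_wrt_iff_nth_less)
  have "k < m" using mono[of m k] m assms by (cases "m < k") (auto simp: not_less_iff_gr_or_eq)
  moreover have "m < l" using mono[of l m] m assms by (cases "l < m") (auto simp: not_less_iff_gr_or_eq)
  ultimately show ?thesis using m by blast
qed

lemma between_alternating:
  assumes alternate: "\<And>k. k + 1 < length w \<Longrightarrow> w ! k = y \<longleftrightarrow> w ! (k + 1) \<noteq> y"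
    and separate: "\<And>k l. k < l \<Longrightarrow> l < length w \<Longrightarrow> w ! k = c \<Longrightarrow> w ! l = c
        \<Longrightarrow> \<exists>m. k < m \<and> m < l \<and> w ! m = d"
    and letters: "set w \<subseteq> {y, c, d}" and "d \<noteq> y"
    and "a < b" and "b < length w" and "w ! a = d" and "w ! b = d"
    and no_d: "\<And>k. a < k \<Longrightarrow> k < b \<Longrightarrow> w ! k \<noteq> d"
  shows "between w a b \<in> {[y], [y, c, y]}"
proof -
  have other: "w ! k = c" if "a < k" "k < b" "w ! k \<noteq> y" for k
  proof -
    have "w ! k \<in> set w" using that \<open>b < length w\<close> by simp
    then show ?thesis using letters no_d[OF that(1,2)] that(3) by blast
  qed
  have "w ! (a + 1) = y"
    using alternate[of a] \<open>a < b\<close> \<open>b < length w\<close> \<open>w ! a = d\<close> \<open>d \<noteq> y\<close> by simp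
  moreover have "a + 1 \<noteq> b" using calculation \<open>w ! b = d\<close> \<open>d \<noteq> y\<close> by auto
  ultimately have y1: "w ! (a + 1) = y" "a + 1 < b" using \<open>a < b\<close> by simp_all
  have y3: "w ! (a + 2) = c \<and> w ! (a + 3) = y \<and> a + 3 < b" if "a + 2 < b"
  proof -
    have "w ! (a + 2) \<noteq> y" using alternate[of "a + 1"] y1 that \<open>b < length w\<close> by simp
    moreover have "w ! (a + 3) = y"
      using alternate[of "a + 2"] calculation that \<open>b < length w\<close> by (simp add: numeral_eq_Suc)
    ultimately show ?thesis
      using other[of "a + 2"] that \<open>w ! b = d\<close> \<open>d \<noteq> y\<close> by (cases "a + 3 = b") auto
  qed
  have "\<not> a + 4 < b"
  proof
    assume "a + 4 < b"
    then have "w ! (a + 4) \<noteq> y"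
      using alternate[of "a + 3"] y3 \<open>b < length w\<close> by (simp add: numeral_eq_Suc)
    then have "w ! (a + 4) = c" using other \<open>a + 4 < b\<close> by simp
    then obtain m where "a + 2 < m" "m < a + 4" "w ! m = d"
      using separate[of "a + 2" "a + 4"] y3 \<open>a + 4 < b\<close> \<open>b < length w\<close> by auto
    then have "m = a + 3" by simp
    then show False using y3 \<open>a + 4 < b\<close> \<open>w ! m = d\<close> \<open>d \<noteq> y\<close> by simp
  qed
  then consider "b = a + 2" | "b = a + 4"
    using y1 y3 by fastforce
  then show ?thesis
  proof cases
    case 1
    then show ?thesis using y1 \<open>b < length w\<close>
      by (simp add: between_def Cons_nth_drop_Suc[symmetric])
  next
    case 2
    then show ?thesis using y1 y3 \<open>b < length w\<close>
      by (simp add: between_def Cons_nth_drop_Suc[symmetric] numeral_eq_Suc)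
  qed
qed

fun edge_key :: "nat \<Rightarrow> nat \<Rightarrow> edge \<Rightarrow> int" where
  "edge_key p q (H i j) = j * int q * (int p + int q)"
| "edge_key p q (V i j) = i * int p * (int p + int q)"
| "edge_key p q (D i j) = (i + j + 1) * int p * int q"

lemma edge_param_eq_key:
  assumes "0 < p" and "0 < q"
  shows "edge_param p q e = edge_key p q e / (real p * real q * (real p + real q))"
proof -
  have "real p * real q * (real p + real q) > 0" using assms by simp
  then show ?thesis using assms by (cases e) (simp_all add: field_simps)
qed

(* A diagonal edge lies on the anti-diagonal x + y = edge_level e; a horizontal or vertical edge
   joins the anti-diagonals edge_level e and edge_level e + 1. *)
fun edge_level :: "edge \<Rightarrow> int" where
  "edge_level (H i j) = i + j"
| "edge_level (V i j) = i + j"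
| "edge_level (D i j) = i + j + 1"

locale coprime_slope =
  fixes p q :: nat
  assumes p_pos: "0 < p" and q_pos: "0 < q" and coprime: "coprime p q"
begin

lemma edge_meets_H_iff:
  "edge_meets p q (H i j) \<longleftrightarrow>
     0 < j \<and> j < int p \<and> i * int p < j * int q \<and> j * int q < (i + 1) * int p"
proof -
  have "edge_meets p q (H i j) \<longleftrightarrow>
      0 \<le> j \<and> j \<le> int p \<and> i * int p < j * int q \<and> j * int q < (i + 1) * int p"
    using p_pos by (simp add: Let_def field_simps)
      (simp only: of_int_of_nat_eq[where 'a = real, symmetric] of_int_mult[symmetric]
        of_int_add[symmetric] of_int_less_iff of_int_le_iff)
  moreover have "j \<noteq> 0 \<and> j \<noteq> int p"
    if "i * int p < j * int q" "j * int q < (i + 1) * int p"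
    using not_dvd_between_multiples[OF that] by auto
  ultimately show ?thesis by auto
qed

lemma edge_meets_V_iff:
  "edge_meets p q (V i j) \<longleftrightarrow>
     0 < i \<and> i < int q \<and> j * int q < i * int p \<and> i * int p < (j + 1) * int q"
proof -
  have "edge_meets p q (V i j) \<longleftrightarrow>
      0 \<le> i \<and> i \<le> int q \<and> j * int q < i * int p \<and> i * int p < (j + 1) * int q"
    using q_pos by (simp add: Let_def field_simps)
      (simp only: of_int_of_nat_eq[where 'a = real, symmetric] of_int_mult[symmetric]
        of_int_add[symmetric] of_int_less_iff of_int_le_iff)
  moreover have "i \<noteq> 0 \<and> i \<noteq> int q"
    if "j * int q < i * int p" "i * int p < (j + 1) * int q"
    using not_dvd_between_multiples[OF that] by auto
  ultimately show ?thesis by auto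
qed

lemma edge_meets_D_iff:
  "edge_meets p q (D i j) \<longleftrightarrow>
     0 < i + j + 1 \<and> i + j + 1 < int p + int q \<and>
     i * int p < (j + 1) * int q \<and> j * int q < (i + 1) * int p"
proof -
  have "edge_meets p q (D i j) \<longleftrightarrow>
      0 \<le> i + j + 1 \<and> i + j + 1 \<le> int p + int q \<and>
      i * int p < (j + 1) * int q \<and> j * int q < (i + 1) * int p"
    using p_pos by (simp add: Let_def field_simps)
      (simp only: of_int_of_nat_eq[where 'a = real, symmetric] of_int_mult[symmetric]
        of_int_add[symmetric] of_int_less_iff of_int_le_iff of_int_0_le_iff
        of_int_1[where 'a = real, symmetric])
  moreover have "i + j + 1 \<noteq> 0 \<and> i + j + 1 \<noteq> int p + int q"
    if "i * int p < (j + 1) * int q" "j * int q < (i + 1) * int p"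
  proof -
    have "i * (int p + int q) < (i + j + 1) * int q" "(i + j + 1) * int q < (i + 1) * (int p + int q)"
      using that by (simp_all add: algebra_simps)
    then show ?thesis using not_dvd_between_multiples by fastforce
  qed
  ultimately show ?thesis by auto
qed

declare edge_meets.simps [simp del]

lemma coprime_int: "coprime (int p) (int q)" "coprime (int q) (int p)"
  using coprime by (simp_all add: coprime_commute)

lemma coprime_p_plus_q: "coprime (int p + int q) (int q)"
  using coprime by (simp add: coprime_iff_gcd_eq_1)

lemma edge_meets_H_iff_div:
  "edge_meets p q (H i j) \<longleftrightarrow> 0 < j \<and> j < int p \<and> i = j * int q div int p"
proof -
  have "\<not> int p dvd j * int q" if "0 < j" "j < int p"
    using coprime_not_dvd_mult[OF coprime_int(1) that] .
  then show ?thesis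
    using p_pos between_multiples_div[of "int p" "j * int q"]
      div_eq_between_multiples[of i "int p" "j * int q"]
    by (auto simp: edge_meets_H_iff)
qed

lemma edge_meets_V_iff_div:
  "edge_meets p q (V i j) \<longleftrightarrow> 0 < i \<and> i < int q \<and> j = i * int p div int q"
proof -
  have "\<not> int q dvd i * int p" if "0 < i" "i < int q"
    using coprime_not_dvd_mult[OF coprime_int(2) that] .
  then show ?thesis
    using q_pos between_multiples_div[of "int q" "i * int p"]
      div_eq_between_multiples[of j "int q" "i * int p"]
    by (auto simp: edge_meets_V_iff)
qed

lemma edge_meets_D_iff_div:
  "edge_meets p q (D i j) \<longleftrightarrow>
     0 < i + j + 1 \<and> i + j + 1 < int p + int q \<and> i = (i + j + 1) * int q div (int p + int q)"
proof -
  have "\<not> (int p + int q) dvd n * int q" if "0 < n" "n < int p + int q" for n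
    using coprime_not_dvd_mult[OF coprime_p_plus_q that] .
  moreover have "i * int p < (j + 1) * int q \<and> j * int q < (i + 1) * int p \<longleftrightarrow>
      i * (int p + int q) < (i + j + 1) * int q \<and> (i + j + 1) * int q < (i + 1) * (int p + int q)"
    by (simp add: algebra_simps)
  ultimately show ?thesis
    using p_pos between_multiples_div[of "int p + int q" "(i + j + 1) * int q"]
      div_eq_between_multiples[of i "int p + int q" "(i + j + 1) * int q"]
    by (auto simp: edge_meets_D_iff)
qed

lemma p_plus_q_pos: "0 < int p + int q"
  using p_pos by simp

lemma edge_param_less_iff:
  "edge_param p q e < edge_param p q e' \<longleftrightarrow> edge_key p q e < edge_key p q e'"
proof -
  define c where "c = real p * real q * (real p + real q)"
  have "0 < c" unfolding c_def using p_pos q_pos by simp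
  then show ?thesis
    unfolding edge_param_eq_key[OF p_pos q_pos] c_def[symmetric] by (auto simp: divide_less_cancel)
qed

lemma edge_param_eq_iff:
  "edge_param p q e = edge_param p q e' \<longleftrightarrow> edge_key p q e = edge_key p q e'"
  by (metis edge_param_less_iff not_less_iff_gr_or_eq)

lemma edge_key_range:
  assumes "edge_meets p q e"
  shows "0 < edge_key p q e \<and> edge_key p q e < int p * int q * (int p + int q)"
  using assms p_pos q_pos p_plus_q_pos
  by (cases e) (auto simp: edge_meets_H_iff edge_meets_V_iff edge_meets_D_iff)

lemma nondiagonal_key_bounds:
  assumes "edge_meets p q e" and "edge_gen e \<noteq> Y"
  shows "edge_level e * (int p * int q) < edge_key p q e"
    and "edge_key p q e < (edge_level e + 1) * (int p * int q)"
proof -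
  have lower: "(i + j) * (int p * int q) < j * int q * (int p + int q)"
    if "i * int p < j * int q" for i j
    using mult_strict_right_mono[OF that, of "int q"] q_pos by (simp add: algebra_simps)
  have upper: "j * int q * (int p + int q) < (i + j + 1) * (int p * int q)"
    if "j * int q < (i + 1) * int p" for i j
    using mult_strict_right_mono[OF that, of "int q"] q_pos by (simp add: algebra_simps)
  have lower': "(i + j) * (int p * int q) < i * int p * (int p + int q)"
    if "j * int q < i * int p" for i j
    using mult_strict_right_mono[OF that, of "int p"] p_pos by (simp add: algebra_simps)
  have upper': "i * int p * (int p + int q) < (i + j + 1) * (int p * int q)"
    if "i * int p < (j + 1) * int q" for i j
    using mult_strict_right_mono[OF that, of "int p"] p_pos by (simp add: algebra_simps)
  show "edge_level e * (int p * int q) < edge_key p q e"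
    "edge_key p q e < (edge_level e + 1) * (int p * int q)"
    using assms lower upper lower' upper'
    by (cases e; simp add: edge_meets_H_iff edge_meets_V_iff)+
qed

lemma nondiagonal_level_range:
  assumes "edge_meets p q e" and "edge_gen e \<noteq> Y"
  shows "0 \<le> edge_level e" and "edge_level e < int p + int q"
proof -
  have pq: "0 < int p * int q" using p_pos q_pos by simp
  have "0 < (edge_level e + 1) * (int p * int q)"
    using nondiagonal_key_bounds(2)[OF assms] edge_key_range[OF assms(1)] by linarith
  from zero_less_mult_pos2[OF this pq] show "0 \<le> edge_level e" by simp
  have "edge_level e * (int p * int q) < (int p + int q) * (int p * int q)"
    using nondiagonal_key_bounds(1)[OF assms] edge_key_range[OF assms(1)]
    unfolding mult.commute[of "int p + int q"] mult.assoc by linarith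
  then show "edge_level e < int p + int q" using mult_less_cancel_right_pos[OF pq] by blast
qed

lemma nondiagonal_level_less:
  assumes "edge_meets p q e" and "edge_meets p q e'"
    and "edge_gen e \<noteq> Y" and "edge_gen e' \<noteq> Y"
    and "edge_key p q e < edge_key p q e'"
  shows "edge_level e < edge_level e'"
  using assms
proof (cases e; cases e')
  fix i j i' j' assume e: "e = H i j" and e': "e' = H i' j'"
  then have "j < j'" using assms(5) q_pos p_plus_q_pos by simp
  then have "j * int q < j' * int q" using q_pos by simp
  then have "i * int p < (i' + 1) * int p"
    using assms(1,2) unfolding e e' edge_meets_H_iff by linarith
  then show ?thesis using \<open>j < j'\<close> p_pos e e' by simp
next
  fix i j i' j' assume e: "e = V i j" and e': "e' = V i' j'"
  then have "i < i'" using assms(5) p_pos p_plus_q_pos by simp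
  then have "i * int p < i' * int p" using p_pos by simp
  then have "j * int q < (j' + 1) * int q"
    using assms(1,2) unfolding e e' edge_meets_V_iff by linarith
  then show ?thesis using \<open>i < i'\<close> q_pos e e' by simp
next
  fix i j i' j' assume e: "e = H i j" and e': "e' = V i' j'"
  then have "j * int q < i' * int p" using assms(5) p_plus_q_pos by simp
  then have "i * int p < i' * int p" "j * int q < (j' + 1) * int q"
    using assms(1,2) unfolding e e' edge_meets_H_iff edge_meets_V_iff by linarith+
  then show ?thesis using p_pos q_pos e e' by simp
next
  fix i j i' j' assume e: "e = V i j" and e': "e' = H i' j'"
  then have "i * int p < j' * int q" using assms(5) p_plus_q_pos by simp
  then have "j * int q < j' * int q" "i * int p < (i' + 1) * int p"
    using assms(1,2) unfolding e e' edge_meets_H_iff edge_meets_V_iff by linarith+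
  then show ?thesis using p_pos q_pos e e' by simp
qed auto

lemma nondiagonal_key_ne_diagonal:
  assumes "edge_meets p q e" and "edge_gen e \<noteq> Y"
  shows "edge_key p q e \<noteq> edge_key p q (D i j)"
proof
  assume "edge_key p q e = edge_key p q (D i j)"
  then have "edge_level e * (int p * int q) < (i + j + 1) * (int p * int q)"
    "(i + j + 1) * (int p * int q) < (edge_level e + 1) * (int p * int q)"
    using nondiagonal_key_bounds[OF assms] by (simp_all add: mult.assoc)
  then show False using p_pos q_pos by simp
qed

lemma edge_key_inj_on: "inj_on (edge_key p q) {e. edge_meets p q e}"
proof (rule inj_onI, simp only: mem_Collect_eq)
  fix e e' assume e: "edge_meets p q e" and e': "edge_meets p q e'"
    and key: "edge_key p q e = edge_key p q e'"
  have mixed: False if "edge_meets p q d" "edge_gen d \<noteq> Y" "e'' = D i j"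
    "edge_key p q d = edge_key p q e''" for d e'' i j
    using nondiagonal_key_ne_diagonal[OF that(1,2), of i j] that(3,4) by blast
  show "e = e'"
  proof (cases e; cases e')
    fix i j i' j' assume "e = H i j" "e' = V i' j'"
    then have "j * int q = i' * int p" using key p_plus_q_pos by simp
    then show ?thesis using coprime_not_dvd_mult[OF coprime_int(1)] e \<open>e = H i j\<close>
      by (metis dvd_triv_right edge_meets_H_iff)
  next
    fix i j i' j' assume "e = V i j" "e' = H i' j'"
    then have "i * int p = j' * int q" using key p_plus_q_pos by simp
    then show ?thesis using coprime_not_dvd_mult[OF coprime_int(2)] e \<open>e = V i j\<close>
      by (metis dvd_triv_right edge_meets_V_iff)
  qed (use e e' key mixed[OF e] mixed[OF e' _ _ key[symmetric]] p_pos q_pos p_plus_q_pos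
      in \<open>auto simp: edge_meets_H_iff_div edge_meets_V_iff_div edge_meets_D_iff_div\<close>)
qed

lemma finite_crossings: "finite {e. edge_meets p q e}"
proof (rule finite_imageD[OF _ edge_key_inj_on])
  show "finite (edge_key p q ` {e. edge_meets p q e})"
    by (rule finite_subset[of _ "{0..int p * int q * (int p + int q)}"])
      (auto dest: edge_key_range)
qed

lemma crossing_edges_spec:
  shows "set (crossing_edges p q) = {e. edge_meets p q e}"
    and "sorted_wrt (\<lambda>e e'. edge_key p q e < edge_key p q e') (crossing_edges p q)"
proof -
  let ?P = "\<lambda>es. distinct es \<and> set es = {e. edge_meets p q e}
    \<and> sorted (map (edge_param p q) es)"
  have inj: "inj_on (edge_param p q) {e. edge_meets p q e}"
    using edge_key_inj_on by (simp add: inj_on_def edge_param_eq_iff)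
  obtain xs where xs: "set xs = {e. edge_meets p q e}" "distinct xs"
    using finite_distinct_list[OF finite_crossings] by blast
  have unique: "es = sort_key (edge_param p q) xs" if "?P es" for es
  proof -
    have "map (edge_param p q) es = map (edge_param p q) (sort_key (edge_param p q) xs)"
      using that xs inj by (intro sorted_distinct_set_unique) (auto simp: distinct_map)
    then show ?thesis using that xs inj by (simp add: inj_on_map_eq_map)
  qed
  have "?P (crossing_edges p q)"
    unfolding crossing_edges_def by (rule theI[of ?P, OF _ unique]) (simp add: xs)
  moreover from this have "sorted_wrt (<) (map (edge_param p q) (crossing_edges p q))"
    using inj by (simp add: strict_sorted_iff distinct_map)
  ultimately show "set (crossing_edges p q) = {e. edge_meets p q e}"
    and "sorted_wrt (\<lambda>e e'. edge_key p q e < edge_key p q e') (crossing_edges p q)"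
    by (simp_all add: sorted_wrt_map edge_param_less_iff)
qed

lemma diagonal_between_nondiagonals:
  assumes "edge_meets p q e" and "edge_meets p q e'"
    and "edge_gen e \<noteq> Y" and "edge_gen e' \<noteq> Y"
    and "edge_key p q e < edge_key p q e'"
  shows "\<exists>d. edge_meets p q d \<and> edge_gen d = Y \<and>
    edge_key p q e < edge_key p q d \<and> edge_key p q d < edge_key p q e'"
proof -
  define n where "n = edge_level e'"
  define i where "i = n * int q div (int p + int q)"
  have "edge_level e < n" "0 \<le> edge_level e" "n < int p + int q"
    unfolding n_def using nondiagonal_level_less[OF assms] nondiagonal_level_range assms by auto
  then have "edge_meets p q (D i (n - 1 - i))" unfolding i_def by (simp add: edge_meets_D_iff_div)
  moreover have "edge_key p q e < n * (int p * int q)"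
  proof -
    have "(edge_level e + 1) * (int p * int q) \<le> n * (int p * int q)"
      using \<open>edge_level e < n\<close> by (intro mult_right_mono) auto
    then show ?thesis using nondiagonal_key_bounds(2)[OF assms(1,3)] by linarith
  qed
  moreover have "n * (int p * int q) < edge_key p q e'"
    unfolding n_def using nondiagonal_key_bounds(1)[OF assms(2,4)] .
  ultimately show ?thesis by (intro exI[of _ "D i (n - 1 - i)"]) (simp add: mult.assoc)
qed

lemma diagonal_coordinates_nonneg:
  assumes "edge_meets p q (D i j)"
  shows "0 \<le> i" and "0 \<le> j"
proof -
  have *: "0 < i + j + 1" "i * int p < (j + 1) * int q" "j * int q < (i + 1) * int p"
    using assms by (simp_all add: edge_meets_D_iff)
  show "0 \<le> i"
  proof (rule ccontr)
    assume "\<not> 0 \<le> i"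
    then have "(i + 1) * int p \<le> 0" by (simp add: mult_nonpos_nonneg)
    then have "j * int q < 0" using *(3) by linarith
    then have "j < 0" using q_pos by (simp add: mult_less_0_iff)
    then show False using * \<open>\<not> 0 \<le> i\<close> by linarith
  qed
  show "0 \<le> j"
  proof (rule ccontr)
    assume "\<not> 0 \<le> j"
    then have "(j + 1) * int q \<le> 0" by (simp add: mult_nonpos_nonneg)
    then have "i * int p < 0" using *(2) by linarith
    then have "i < 0" using p_pos by (simp add: mult_less_0_iff)
    then show False using * \<open>\<not> 0 \<le> j\<close> by linarith
  qed
qed

lemma diagonal_exit:
  assumes "edge_meets p q (D i j)" and "i + j + 2 < int p + int q"
  shows "edge_meets p q (H i (j + 1)) \<or> edge_meets p q (V (i + 1) j)"
proof -
  have low: "i * int p < (j + 1) * int q" and high: "j * int q < (i + 1) * int p"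
    using assms(1) by (simp_all add: edge_meets_D_iff)
  have "0 \<le> i" "0 \<le> j" using diagonal_coordinates_nonneg[OF assms(1)] by simp_all
  have room: "j + 1 < int p \<or> i + 1 < int q" using assms(2) by linarith
  consider "(j + 1) * int q < (i + 1) * int p" | "(i + 1) * int p < (j + 1) * int q"
    | "(i + 1) * int p = (j + 1) * int q" by linarith
  then show ?thesis
  proof cases
    case 1
    have "j + 1 < int p"
    proof (rule ccontr)
      assume "\<not> j + 1 < int p"
      then have "int p * int q \<le> (j + 1) * int q" "(i + 1) * int p < int q * int p"
        using room q_pos p_pos by (simp_all add: mult_right_mono)
      then show False using 1 by (simp add: mult.commute)
    qed
    then show ?thesis using 1 low \<open>0 \<le> j\<close> by (simp add: edge_meets_H_iff)
  next
    case 2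
    have "i + 1 < int q"
    proof (rule ccontr)
      assume "\<not> i + 1 < int q"
      then have "int q * int p \<le> (i + 1) * int p" "(j + 1) * int q < int p * int q"
        using room q_pos p_pos by (simp_all add: mult_right_mono)
      then show False using 2 by (simp add: mult.commute)
    qed
    then show ?thesis using 2 high \<open>0 \<le> i\<close> by (simp add: edge_meets_V_iff)
  next
    case 3
    then have "int p dvd (j + 1) * int q" "int q dvd (i + 1) * int p"
      by (metis dvd_triv_right)+
    then show ?thesis
      using room \<open>0 \<le> i\<close> \<open>0 \<le> j\<close> coprime_not_dvd_mult[OF coprime_int(1), of "j + 1"]
        coprime_not_dvd_mult[OF coprime_int(2), of "i + 1"]
      by auto
  qed
qed

lemma nondiagonal_between_diagonals:
  assumes "edge_meets p q (D i j)" and "edge_meets p q (D i' j')"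
    and "edge_key p q (D i j) < edge_key p q (D i' j')"
  shows "\<exists>e. edge_meets p q e \<and> edge_gen e \<noteq> Y \<and>
    edge_key p q (D i j) < edge_key p q e \<and> edge_key p q e < edge_key p q (D i' j')"
proof -
  have "i + j < i' + j'" "i' + j' + 1 < int p + int q"
    using assms p_pos q_pos by (simp_all add: edge_meets_D_iff)
  then obtain e where e: "edge_meets p q e" "e = H i (j + 1) \<or> e = V (i + 1) j"
    using diagonal_exit[OF assms(1)] by fastforce
  then have gen: "edge_gen e \<noteq> Y" and level: "edge_level e = i + j + 1" by auto
  have "edge_key p q (D i j) = edge_level e * (int p * int q)"
    and "edge_key p q (D i' j') = (i' + j' + 1) * (int p * int q)"
    using level by (simp_all add: mult.assoc)
  moreover have "(edge_level e + 1) * (int p * int q) \<le> (i' + j' + 1) * (int p * int q)"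
    using level \<open>i + j < i' + j'\<close> by (intro mult_right_mono) auto
  ultimately show ?thesis using e(1) gen nondiagonal_key_bounds[OF e(1) gen] by auto
qed

lemma vertical_between_horizontals:
  assumes "p < q" and "edge_meets p q (H i j)" and "edge_meets p q (H i' j')"
    and "edge_key p q (H i j) < edge_key p q (H i' j')"
  shows "\<exists>e. edge_meets p q e \<and> edge_gen e = Z \<and>
    edge_key p q (H i j) < edge_key p q e \<and> edge_key p q e < edge_key p q (H i' j')"
proof -
  have h: "0 < j" "i * int p < j * int q" "j * int q < (i + 1) * int p"
    and h': "j' < int p" using assms(2,3) by (simp_all add: edge_meets_H_iff)
  have "j + 1 \<le> j'" using assms(4) q_pos p_plus_q_pos by simp
  then have "(i + 1) * int p < j' * int q"
    using h(2) \<open>p < q\<close> mult_right_mono[of "j + 1" j' "int q"] by (simp add: algebra_simps)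
  moreover have "j' * int q < int q * int p" using h' q_pos by simp
  ultimately have "(i + 1) * int p < int q * int p" by linarith
  then have "i + 1 < int q" using p_pos by simp
  moreover have "0 < (i + 1) * int p" using h(1,3) q_pos mult_pos_pos[of j "int q"] by linarith
  then have "0 < i + 1" using p_pos by (simp add: zero_less_mult_iff)
  ultimately have "edge_meets p q (V (i + 1) ((i + 1) * int p div int q))"
    by (simp add: edge_meets_V_iff_div)
  with h(3) \<open>(i + 1) * int p < j' * int q\<close> show ?thesis
    by (intro exI[of _ "V (i + 1) ((i + 1) * int p div int q)"]) (simp add: p_plus_q_pos)
qed

lemma horizontal_between_verticals:
  assumes "q < p" and "edge_meets p q (V i j)" and "edge_meets p q (V i' j')"
    and "edge_key p q (V i j) < edge_key p q (V i' j')"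
  shows "\<exists>e. edge_meets p q e \<and> edge_gen e = X \<and>
    edge_key p q (V i j) < edge_key p q e \<and> edge_key p q e < edge_key p q (V i' j')"
proof -
  have v: "0 < i" "j * int q < i * int p" "i * int p < (j + 1) * int q"
    and v': "i' < int q" using assms(2,3) by (simp_all add: edge_meets_V_iff)
  have "i + 1 \<le> i'" using assms(4) p_pos p_plus_q_pos by simp
  then have "(j + 1) * int q < i' * int p"
    using v(2) \<open>q < p\<close> mult_right_mono[of "i + 1" i' "int p"] by (simp add: algebra_simps)
  moreover have "i' * int p < int p * int q" using v' p_pos by simp
  ultimately have "(j + 1) * int q < int p * int q" by linarith
  then have "j + 1 < int p" using q_pos by simp
  moreover have "0 < (j + 1) * int q" using v(1,3) p_pos mult_pos_pos[of i "int p"] by linarith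
  then have "0 < j + 1" using q_pos by (simp add: zero_less_mult_iff)
  ultimately have "edge_meets p q (H ((j + 1) * int q div int p) (j + 1))"
    by (simp add: edge_meets_H_iff_div)
  with v(3) \<open>(j + 1) * int q < i' * int p\<close> show ?thesis
    by (intro exI[of _ "H ((j + 1) * int q div int p) (j + 1)"]) (simp add: p_plus_q_pos)
qed

lemma crossing_edge_position_between:
  assumes "k < length (crossing_edges p q)" and "l < length (crossing_edges p q)"
    and "edge_meets p q e"
    and "edge_key p q (crossing_edges p q ! k) < edge_key p q e"
    and "edge_key p q e < edge_key p q (crossing_edges p q ! l)"
  shows "\<exists>m. k < m \<and> m < l \<and> crossing_edges p q ! m = e"
  using sorted_wrt_nth_between[OF crossing_edges_spec(2)] crossing_edges_spec(1) assms by simp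

lemma omega_gens_nth:
  assumes "k < length (map fst (omega p q))"
  shows "map fst (omega p q) ! k = edge_gen (crossing_edges p q ! k)"
    and "edge_meets p q (crossing_edges p q ! k)"
  using assms crossing_edges_spec(1) nth_mem[of k "crossing_edges p q"]
  by (auto simp: map_fst_omega)

lemma omega_gens_alternate:
  assumes "k + 1 < length (map fst (omega p q))"
  shows "map fst (omega p q) ! k = Y \<longleftrightarrow> map fst (omega p q) ! (k + 1) \<noteq> Y"
proof -
  let ?e = "crossing_edges p q ! k" and ?e' = "crossing_edges p q ! (k + 1)"
  have meets: "edge_meets p q ?e" "edge_meets p q ?e'" using assms omega_gens_nth(2) by simp_all
  have less: "edge_key p q ?e < edge_key p q ?e'"
    using crossing_edges_spec(2) assms by (simp add: sorted_wrt_iff_nth_less map_fst_omega)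
  have no_edge_between: False
    if "edge_meets p q d" "edge_key p q ?e < edge_key p q d" "edge_key p q d < edge_key p q ?e'" for d
    using crossing_edge_position_between[OF _ _ that] assms by (auto simp: map_fst_omega)
  have "edge_gen ?e = Y \<longleftrightarrow> edge_gen ?e' \<noteq> Y"
  proof (cases "edge_gen ?e = Y"; cases "edge_gen ?e' = Y")
    assume "edge_gen ?e = Y" "edge_gen ?e' = Y"
    then obtain i j i' j' where "?e = D i j" "?e' = D i' j'"
      by (metis edge_gen.elims gen.distinct)
    then show ?thesis
      using nondiagonal_between_diagonals[of i j i' j'] meets less no_edge_between by metis
  next
    assume "edge_gen ?e \<noteq> Y" "edge_gen ?e' \<noteq> Y"
    then show ?thesis using diagonal_between_nondiagonals meets less no_edge_between by metis
  qed simp_all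
  then show ?thesis using assms omega_gens_nth(1) by simp
qed

lemma omega_gens_separate:
  assumes "k < l" and "l < length (map fst (omega p q))"
  shows "p < q \<Longrightarrow> map fst (omega p q) ! k = X \<Longrightarrow> map fst (omega p q) ! l = X
      \<Longrightarrow> \<exists>m. k < m \<and> m < l \<and> map fst (omega p q) ! m = Z"
    and "q < p \<Longrightarrow> map fst (omega p q) ! k = Z \<Longrightarrow> map fst (omega p q) ! l = Z
      \<Longrightarrow> \<exists>m. k < m \<and> m < l \<and> map fst (omega p q) ! m = X"
proof -
  let ?e = "crossing_edges p q ! k" and ?e' = "crossing_edges p q ! l"
  have meets: "edge_meets p q ?e" "edge_meets p q ?e'" using assms omega_gens_nth(2) by simp_all
  have less: "edge_key p q ?e < edge_key p q ?e'"
    using crossing_edges_spec(2) assms by (simp add: sorted_wrt_iff_nth_less map_fst_omega)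
  have gen_between: "\<exists>m. k < m \<and> m < l \<and> map fst (omega p q) ! m = g"
    if "edge_meets p q d" "edge_gen d = g"
      "edge_key p q ?e < edge_key p q d" "edge_key p q d < edge_key p q ?e'" for d g
    using crossing_edge_position_between[OF _ _ that(1,3,4)] assms omega_gens_nth(1) that(2)
    by (fastforce simp: map_fst_omega)
  show "\<exists>m. k < m \<and> m < l \<and> map fst (omega p q) ! m = Z"
    if pq: "p < q" and gens: "map fst (omega p q) ! k = X" "map fst (omega p q) ! l = X"
  proof -
    obtain i j i' j' where "?e = H i j" "?e' = H i' j'"
      using gens assms omega_gens_nth(1) by (metis edge_gen.elims gen.distinct less_trans)
    then show ?thesis
      using vertical_between_horizontals[OF pq, of i j i' j'] meets less gen_between by metis
  qed
  show "\<exists>m. k < m \<and> m < l \<and> map fst (omega p q) ! m = X"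
    if qp: "q < p" and gens: "map fst (omega p q) ! k = Z" "map fst (omega p q) ! l = Z"
  proof -
    obtain i j i' j' where "?e = V i j" "?e' = V i' j'"
      using gens assms omega_gens_nth(1) by (metis edge_gen.elims gen.distinct less_trans)
    then show ?thesis
      using horizontal_between_verticals[OF qp, of i j i' j'] meets less gen_between by metis
  qed
qed

end

theorem lemma4p6:
  fixes p q :: nat
  assumes "0 < p" and "0 < q" and "coprime p q"
  shows "(p < q \<longrightarrow>
           (\<forall>a b. a < b \<and> b < length (omega p q)
              \<and> fst (omega p q ! a) = Z \<and> fst (omega p q ! b) = Z
              \<and> (\<forall>k. a < k \<and> k < b \<longrightarrow> fst (omega p q ! k) \<noteq> Z)
              \<longrightarrow> map fst (between (omega p q) a b) \<in> {[Y], [Y, X, Y]}))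
       \<and> (q < p \<longrightarrow>
           (\<forall>a b. a < b \<and> b < length (omega p q)
              \<and> fst (omega p q ! a) = X \<and> fst (omega p q ! b) = X
              \<and> (\<forall>k. a < k \<and> k < b \<longrightarrow> fst (omega p q ! k) \<noteq> X)
              \<longrightarrow> map fst (between (omega p q) a b) \<in> {[Y], [Y, Z, Y]}))"
proof -
  interpret coprime_slope p q using assms by unfold_locales
  let ?w = "map fst (omega p q)"
  show ?thesis
  proof (intro conjI impI allI)
    fix a b assume "p < q" and "a < b \<and> b < length (omega p q)
      \<and> fst (omega p q ! a) = Z \<and> fst (omega p q ! b) = Z
      \<and> (\<forall>k. a < k \<and> k < b \<longrightarrow> fst (omega p q ! k) \<noteq> Z)"
    then have "between ?w a b \<in> {[Y], [Y, X, Y]}"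
      by (intro between_alternating[OF omega_gens_alternate omega_gens_separate(1)])
        (auto intro: gen.exhaust)
    then show "map fst (between (omega p q) a b) \<in> {[Y], [Y, X, Y]}" by (simp add: between_map)
  next
    fix a b assume "q < p" and "a < b \<and> b < length (omega p q)
      \<and> fst (omega p q ! a) = X \<and> fst (omega p q ! b) = X
      \<and> (\<forall>k. a < k \<and> k < b \<longrightarrow> fst (omega p q ! k) \<noteq> X)"
    then have "between ?w a b \<in> {[Y], [Y, Z, Y]}"
      by (intro between_alternating[OF omega_gens_alternate omega_gens_separate(2)])
        (auto intro: gen.exhaust)
    then show "map fst (between (omega p q) a b) \<in> {[Y], [Y, Z, Y]}" by (simp add: between_map)
  qed
qed

end
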